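(* Let $2\le s\le r$ be integers with $r>2$. For every graph $\Gamma$, we have $$\mathrm{ex}(\Gamma,\mathcal{P}_{K_{s,r}})\ \ge\ \frac{1}{2}\,e(\Gamma)\,\mathrm{ex}(\chi(\overline{\Gamma}),K_{s,r})\Big/\binom{\chi(\overline{\Gamma})}{2}.$$
   Context: For a graph $H$, $\mathcal{P}_H$ is the hereditary property of not containing $H$ as an induced subgraph. For a property $\mathcal{P}$ and a graph $\Gamma$, $\mathrm{ex}(\Gamma,\mathcal{P})$ is the maximum number of edges of a subgraph $G\subseteq\Gamma$ that belongs to $\mathcal{P}$. $\mathrm{ex}(k,K_{s,r})$ is the maximum number of edges of a $k$-vertex graph not containing $K_{s,r}$ as a (not necessarily induced) subgraph. $\overline{\Gamma}$ is the complement of $\Gamma$ and $\chi$ denotes chromatic number. *)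

theory Defs
  imports Complex_Main
begin

definition graph :: "'a set \<Rightarrow> 'a set set \<Rightarrow> bool" where
  "graph V E \<longleftrightarrow> finite V \<and> (\<forall>e\<in>E. e \<subseteq> V \<and> card e = 2)"

definition complement_edges :: "'a set \<Rightarrow> 'a set set \<Rightarrow> 'a set set" where
  "complement_edges V E = {{x, y} | x y. x \<in> V \<and> y \<in> V \<and> x \<noteq> y \<and> {x, y} \<notin> E}"

definition proper_colouring :: "'a set \<Rightarrow> 'a set set \<Rightarrow> nat \<Rightarrow> ('a \<Rightarrow> nat) \<Rightarrow> bool" where
  "proper_colouring V E k f \<longleftrightarrow> f ` V \<subseteq> {..<k} \<and> (\<forall>x y. {x, y} \<in> E \<longrightarrow> f x \<noteq> f y)"

definition chromatic_number :: "'a set \<Rightarrow> 'a set set \<Rightarrow> nat" where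
  "chromatic_number V E = (LEAST k. \<exists>f. proper_colouring V E k f)"

definition has_Ksr :: "nat \<Rightarrow> nat \<Rightarrow> 'a set \<Rightarrow> 'a set set \<Rightarrow> bool" where
  "has_Ksr s r V E \<longleftrightarrow> (\<exists>A B. A \<subseteq> V \<and> B \<subseteq> V \<and> A \<inter> B = {} \<and> card A = s \<and> card B = r
      \<and> (\<forall>a\<in>A. \<forall>b\<in>B. {a, b} \<in> E))"

definition has_induced_Ksr :: "nat \<Rightarrow> nat \<Rightarrow> 'a set \<Rightarrow> 'a set set \<Rightarrow> bool" where
  "has_induced_Ksr s r V E \<longleftrightarrow> (\<exists>A B. A \<subseteq> V \<and> B \<subseteq> V \<and> A \<inter> B = {} \<and> card A = s \<and> card B = r
      \<and> (\<forall>a\<in>A. \<forall>b\<in>B. {a, b} \<in> E)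
      \<and> (\<forall>a\<in>A. \<forall>a'\<in>A. {a, a'} \<notin> E)
      \<and> (\<forall>b\<in>B. \<forall>b'\<in>B. {b, b'} \<notin> E))"

definition ex_Ksr :: "nat \<Rightarrow> nat \<Rightarrow> nat \<Rightarrow> nat" where
  "ex_Ksr k s r = Max {card F | F. graph {..<k} F \<and> \<not> has_Ksr s r {..<k} F}"

text \<open>ex(Gamma, P_{K_{s,r}}): max edges of a subgraph of Gamma with no induced K_{s,r}.
  Subgraphs are taken spanning (same vertex set); since the property is hereditary this loses nothing.\<close>
definition ex_induced_free :: "'a set \<Rightarrow> 'a set set \<Rightarrow> nat \<Rightarrow> nat \<Rightarrow> nat" where
  "ex_induced_free V E s r = Max {card F | F. F \<subseteq> E \<and> \<not> has_induced_Ksr s r V F}"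

end

theory Submission
  imports Defs "HOL-Combinatorics.Permutations"
begin

text \<open>Colour the complement of \<open>\<Gamma>\<close> with \<open>k = \<chi>(\<Gamma>\<^sup>c)\<close> colours, so that every colour class
  is a clique of \<open>\<Gamma>\<close>. Take an extremal \<open>K\<^sub>s\<^sub>,\<^sub>r\<close>-free graph \<open>H\<close> on the \<open>k\<close> colours and a
  cut \<open>H'\<close> of \<open>H\<close> containing at least half of its edges. For a permutation \<open>\<sigma>\<close> of the colours
  keep the edges of \<open>\<Gamma>\<close> inside colour classes and those joining classes \<open>i, j\<close> with
  \<open>{\<sigma> i, \<sigma> j} \<in> H'\<close>. In an induced \<open>K\<^sub>s\<^sub>,\<^sub>r\<close> of this graph each side has distinct colours
  (equal colours are adjacent), and since \<open>H'\<close> is bipartite and \<open>r \<ge> 3\<close> the two sides share no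
  colour; so the colours would carry a \<open>K\<^sub>s\<^sub>,\<^sub>r\<close> of \<open>H\<close>. Averaged over \<open>\<sigma>\<close>, an edge between
  two classes survives with probability \<open>|H'| / (k choose 2)\<close>.\<close>

definition cut_edges :: "'a set set \<Rightarrow> 'a set \<Rightarrow> 'a set set" where
  "cut_edges H S = {e\<in>H. card (e \<inter> S) = 1}"

definition pullback_edges :: "'a set set \<Rightarrow> ('a \<Rightarrow> 'b) \<Rightarrow> 'b set set \<Rightarrow> 'a set set" where
  "pullback_edges E c H = {e\<in>E. card (c ` e) = 1 \<or> c ` e \<in> H}"

lemma sum_card_filter_swap:
  assumes "finite A" "finite B"
  shows "(\<Sum>a\<in>A. card {b\<in>B. R a b}) = (\<Sum>b\<in>B. card {a\<in>A. R a b})"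
proof -
  have "(\<Sum>a\<in>A. card {b\<in>B. R a b}) = (\<Sum>a\<in>A. \<Sum>b\<in>B. of_bool (R a b))"
    using assms(2) by (simp add: Int_def)
  also have "\<dots> = (\<Sum>b\<in>B. \<Sum>a\<in>A. of_bool (R a b))"
    by (rule sum.swap)
  also have "\<dots> = (\<Sum>b\<in>B. card {a\<in>A. R a b})"
    using assms(1) by (simp add: Int_def)
  finally show ?thesis .
qed

lemma ex_card_filter_ge_average:
  assumes "finite P" "P \<noteq> {}" "finite E"
    and "\<And>e. e \<in> E \<Longrightarrow> N \<le> card {p\<in>P. R p e}"
  shows "\<exists>p\<in>P. card E * N \<le> card {e\<in>E. R p e} * card P"
proof (rule ccontr)
  assume "\<not> ?thesis"
  then have "(\<Sum>p\<in>P. card {e\<in>E. R p e} * card P) < (\<Sum>p\<in>P. card E * N)"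
    using assms(1,2) by (intro sum_strict_mono) auto
  also have "\<dots> = card P * (card E * N)"
    by simp
  also have "\<dots> \<le> card P * (\<Sum>e\<in>E. card {p\<in>P. R p e})"
    using sum_bounded_below[of E N "\<lambda>e. card {p\<in>P. R p e}"] assms(4) by simp
  also have "\<dots> = card P * (\<Sum>p\<in>P. card {e\<in>E. R p e})"
    using sum_card_filter_swap[OF assms(1,3), of R] by simp
  also have "\<dots> = (\<Sum>p\<in>P. card {e\<in>E. R p e} * card P)"
    by (simp add: sum_distrib_left mult.commute)
  finally show False
    by (simp only: less_irrefl)
qed

lemma doubleton_mem_cut_edges_iff:
  assumes "x \<noteq> y"
  shows "{x, y} \<in> cut_edges H S \<longleftrightarrow> {x, y} \<in> H \<and> (x \<in> S \<longleftrightarrow> y \<notin> S)"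
  using assms unfolding cut_edges_def by (cases "x \<in> S"; cases "y \<in> S") auto

lemma card_cut_edges_move_vertex:
  assumes "finite H" "\<forall>e\<in>H. card e = 2"
  shows "card (cut_edges H (S - {x})) + card (cut_edges H (insert x S))
    = 2 * card (cut_edges {e\<in>H. x \<notin> e} S) + card {e\<in>H. x \<in> e}"
proof -
  define H0 where "H0 = {e\<in>H. x \<notin> e}"
  define D where "D = {e\<in>H. x \<in> e}"
  define D' where "D' = {e\<in>D. e - {x} \<subseteq> S}"
  have fin: "finite (cut_edges H0 S)" "finite D'" "D' \<subseteq> D"
    using assms(1) unfolding H0_def D_def D'_def cut_edges_def by auto
  have cut_H0: "e \<in> cut_edges H S' \<longleftrightarrow> e \<in> cut_edges H0 S"
    if "e \<in> H0" "S' \<in> {S - {x}, insert x S}" for e S'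
  proof -
    have "e \<inter> S' = e \<inter> S"
      using that unfolding H0_def by auto
    then show ?thesis
      using that unfolding cut_edges_def H0_def by auto
  qed
  have cut_D: "(e \<in> cut_edges H (S - {x}) \<longleftrightarrow> e \<in> D') \<and> (e \<in> cut_edges H (insert x S) \<longleftrightarrow> e \<notin> D')"
    if "e \<in> D" for e
  proof -
    have "card e = 2" "x \<in> e"
      using that assms(2) unfolding D_def by auto
    then obtain y where y: "y \<noteq> x" "e = {x, y}"
      by (metis card_2_iff doubleton_eq_iff insertE singletonD)
    then show ?thesis
      using that doubleton_mem_cut_edges_iff[of x y H] unfolding D'_def D_def by auto
  qed
  have disj: "cut_edges H0 S \<inter> D' = {}" "cut_edges H0 S \<inter> (D - D') = {}"
    unfolding cut_edges_def H0_def D_def D'_def by auto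
  have "cut_edges H (S - {x}) = cut_edges H0 S \<union> D'"
    using cut_H0 cut_D unfolding cut_edges_def H0_def D_def D'_def by blast
  then have "card (cut_edges H (S - {x})) = card (cut_edges H0 S) + card D'"
    using card_Un_disjoint[OF fin(1,2) disj(1)] by simp
  moreover have "cut_edges H (insert x S) = cut_edges H0 S \<union> (D - D')"
    using cut_H0 cut_D unfolding cut_edges_def H0_def D_def D'_def by blast
  then have "card (cut_edges H (insert x S)) = card (cut_edges H0 S) + (card D - card D')"
    using card_Un_disjoint[OF fin(1) _ disj(2)] card_Diff_subset[OF fin(2,3)] assms(1)
    unfolding D_def by simp
  moreover have "card D' \<le> card D"
    using assms(1) fin(3) unfolding D_def by (simp add: card_mono)
  ultimately show ?thesis
    unfolding H0_def D_def by simp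
qed

lemma exists_cut_edges_half:
  assumes "graph W H"
  shows "\<exists>S. card H \<le> 2 * card (cut_edges H S)"
proof -
  have "finite W" "\<forall>e\<in>H. e \<subseteq> W \<and> card e = 2"
    using assms unfolding graph_def by auto
  then show ?thesis
  proof (induction W arbitrary: H rule: finite_induct)
    case empty
    then have "H = {}"
      by fastforce
    then show ?case
      by simp
  next
    case (insert x W)
    obtain S where S: "card {e\<in>H. x \<notin> e} \<le> 2 * card (cut_edges {e\<in>H. x \<notin> e} S)"
      using insert.IH[of "{e\<in>H. x \<notin> e}"] insert.prems by blast
    have "finite H"
      by (rule finite_subset[of _ "Pow (insert x W)"]) (use insert in auto)
    have "card H = card ({e\<in>H. x \<notin> e} \<union> {e\<in>H. x \<in> e})"
      by (rule arg_cong[where f = card]) auto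
    also have "\<dots> = card {e\<in>H. x \<notin> e} + card {e\<in>H. x \<in> e}"
      using \<open>finite H\<close> by (intro card_Un_disjoint) auto
    finally have "card H = card {e\<in>H. x \<notin> e} + card {e\<in>H. x \<in> e}" .
    then have "card H \<le> card (cut_edges H (S - {x})) + card (cut_edges H (insert x S))"
      using S card_cut_edges_move_vertex[OF \<open>finite H\<close>, of S x] insert.prems by simp
    then have "card H \<le> 2 * card (cut_edges H (S - {x})) \<or> card H \<le> 2 * card (cut_edges H (insert x S))"
      by linarith
    then show ?case
      by blast
  qed
qed

lemma ex_permutes_image_eq_2_subset:
  assumes "q \<subseteq> S" "card q = 2" "p \<subseteq> S" "card p = 2"
  shows "\<exists>\<tau>. \<tau> permutes S \<and> \<tau> ` q = p"
proof -
  obtain a b where q: "q = {a, b}" "a \<noteq> b"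
    using assms(2) by (meson card_2_iff)
  obtain c d where p: "p = {c, d}" "c \<noteq> d"
    using assms(4) by (meson card_2_iff)
  define \<tau> where "\<tau> = transpose (transpose a c b) d \<circ> transpose a c"
  have "transpose a c b \<in> S"
    using assms q p by (auto simp: transpose_def)
  then have "\<tau> permutes S"
    unfolding \<tau>_def using assms q p by (auto intro!: permutes_compose permutes_swap_id)
  moreover have "\<tau> a = c" "\<tau> b = d"
    unfolding \<tau>_def using q p by (auto simp: transpose_def)
  ultimately show ?thesis
    using q p by auto
qed

lemma card_permutes_image_mem_2_subset_indep:
  assumes "q \<subseteq> S" "card q = 2" "p \<subseteq> S" "card p = 2"
  shows "card {\<sigma>. \<sigma> permutes S \<and> \<sigma> ` p \<in> H} = card {\<sigma>. \<sigma> permutes S \<and> \<sigma> ` q \<in> H}"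
proof -
  obtain \<tau> where \<tau>: "\<tau> permutes S" "\<tau> ` q = p"
    using ex_permutes_image_eq_2_subset[OF assms] by blast
  have "inv \<tau> ` p = q"
    using \<tau> by (metis image_inv_f_f permutes_inj)
  have "bij_betw (\<lambda>\<sigma>. \<sigma> \<circ> \<tau>) {\<sigma>. \<sigma> permutes S \<and> \<sigma> ` p \<in> H} {\<sigma>. \<sigma> permutes S \<and> \<sigma> ` q \<in> H}"
  proof (rule bij_betw_byWitness[where f' = "\<lambda>\<rho>. \<rho> \<circ> inv \<tau>"])
    show "\<forall>\<sigma>\<in>{\<sigma>. \<sigma> permutes S \<and> \<sigma> ` p \<in> H}. \<sigma> \<circ> \<tau> \<circ> inv \<tau> = \<sigma>"
      using permutes_inv_o(1)[OF \<tau>(1)] by (simp add: o_assoc[symmetric])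
    show "\<forall>\<rho>\<in>{\<sigma>. \<sigma> permutes S \<and> \<sigma> ` q \<in> H}. \<rho> \<circ> inv \<tau> \<circ> \<tau> = \<rho>"
      using permutes_inv_o(2)[OF \<tau>(1)] by (simp add: o_assoc[symmetric])
    show "(\<lambda>\<sigma>. \<sigma> \<circ> \<tau>) ` {\<sigma>. \<sigma> permutes S \<and> \<sigma> ` p \<in> H} \<subseteq> {\<sigma>. \<sigma> permutes S \<and> \<sigma> ` q \<in> H}"
      using \<tau> by (auto simp: permutes_compose image_image)
    show "(\<lambda>\<rho>. \<rho> \<circ> inv \<tau>) ` {\<sigma>. \<sigma> permutes S \<and> \<sigma> ` q \<in> H} \<subseteq> {\<sigma>. \<sigma> permutes S \<and> \<sigma> ` p \<in> H}"
      using \<tau>(1) \<open>inv \<tau> ` p = q\<close> by (auto simp: permutes_compose permutes_inv image_image)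
  qed
  then show ?thesis
    by (rule bij_betw_same_card)
qed

lemma card_preimage_subsets_permutes:
  assumes "\<sigma> permutes S" "H \<subseteq> {p. p \<subseteq> S \<and> card p = n}"
  shows "card {p. p \<subseteq> S \<and> card p = n \<and> \<sigma> ` p \<in> H} = card H"
proof -
  have inj: "inj \<sigma>" "inj (inv \<sigma>)"
    using assms(1) permutes_inj permutes_inv by blast+
  have "{p. p \<subseteq> S \<and> card p = n \<and> \<sigma> ` p \<in> H} = (\<lambda>e. inv \<sigma> ` e) ` H"
  proof (intro set_eqI iffI)
    fix p
    assume "p \<in> {p. p \<subseteq> S \<and> card p = n \<and> \<sigma> ` p \<in> H}"
    moreover have "p = inv \<sigma> ` \<sigma> ` p"
      using inj by (simp add: image_inv_f_f)
    ultimately show "p \<in> (\<lambda>e. inv \<sigma> ` e) ` H"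
      by blast
  next
    fix p
    assume "p \<in> (\<lambda>e. inv \<sigma> ` e) ` H"
    then obtain e where e: "e \<in> H" "p = inv \<sigma> ` e"
      by auto
    then have "\<sigma> ` p = e"
      using permutes_surj[OF assms(1)] by (simp add: image_f_inv_f)
    moreover have "e \<subseteq> S" "card e = n"
      using e assms(2) by auto
    then have "card p = n" "p \<subseteq> S"
      using e inj(2) permutes_image[OF permutes_inv[OF assms(1)]]
      by (auto simp: card_image inj_on_subset dest: image_mono[of _ _ "inv \<sigma>"])
    ultimately show "p \<in> {p. p \<subseteq> S \<and> card p = n \<and> \<sigma> ` p \<in> H}"
      using e by auto
  qed
  moreover have "inj_on (\<lambda>e. inv \<sigma> ` e) H"
    using inj by (meson inj_image_eq_iff inj_onI)
  ultimately show ?thesis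
    by (simp add: card_image)
qed

lemma card_permutes_image_mem:
  assumes "finite S" "H \<subseteq> {p. p \<subseteq> S \<and> card p = 2}" "q \<subseteq> S" "card q = 2"
  shows "card {\<sigma>. \<sigma> permutes S \<and> \<sigma> ` q \<in> H} * (card S choose 2) = fact (card S) * card H"
proof -
  define Pairs where "Pairs = {p. p \<subseteq> S \<and> card p = 2}"
  define P where "P = {\<sigma>. \<sigma> permutes S}"
  have fin: "finite P" "finite Pairs"
    unfolding P_def Pairs_def using assms(1) by (simp_all add: finite_permutations)
  have "card {\<sigma>\<in>P. \<sigma> ` q \<in> H} * (card S choose 2) = (\<Sum>p\<in>Pairs. card {\<sigma>\<in>P. \<sigma> ` p \<in> H})"
    using card_permutes_image_mem_2_subset_indep[OF assms(3,4)] n_subsets[OF assms(1), of 2]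
    unfolding P_def Pairs_def by simp
  also have "\<dots> = (\<Sum>\<sigma>\<in>P. card {p\<in>Pairs. \<sigma> ` p \<in> H})"
    using sum_card_filter_swap[OF fin(2,1)] by simp
  also have "\<dots> = (\<Sum>\<sigma>\<in>P. card H)"
    using card_preimage_subsets_permutes[OF _ assms(2)] unfolding P_def Pairs_def by (simp add: conj_assoc)
  also have "\<dots> = fact (card S) * card H"
    using assms(1) unfolding P_def by (simp add: card_permutations)
  finally show ?thesis
    unfolding P_def by simp
qed

lemma card_le_ex_induced_free:
  assumes "finite E" "F \<subseteq> E" "\<not> has_induced_Ksr s r V F"
  shows "card F \<le> ex_induced_free V E s r"
proof -
  have "finite {card F | F. F \<subseteq> E \<and> \<not> has_induced_Ksr s r V F}"
    by (rule finite_subset[of _ "card ` Pow E"]) (use assms(1) in auto)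
  then show ?thesis
    unfolding ex_induced_free_def using assms(2,3) by (auto intro: Max_ge)
qed

lemma ex_Ksr_attained:
  assumes "0 < s" "0 < r"
  obtains H where "graph {..<k} H" "\<not> has_Ksr s r {..<k} H" "card H = ex_Ksr k s r"
proof -
  define X where "X = {card F | F. graph {..<k} F \<and> \<not> has_Ksr s r {..<k} F}"
  have "finite X"
    unfolding X_def by (rule finite_subset[of _ "card ` Pow (Pow {..<k})"]) (auto simp: graph_def)
  moreover have "\<not> has_Ksr s r {..<k} {}"
    using assms unfolding has_Ksr_def by fastforce
  then have "0 \<in> X"
    unfolding X_def graph_def by force
  ultimately have "Max X \<in> X"
    using Max_in by blast
  then show ?thesis
    using that unfolding X_def ex_Ksr_def by auto
qed

lemma proper_colouring_chromatic_number:
  assumes "graph V E"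
  obtains f where "proper_colouring V E (chromatic_number V E) f"
proof -
  obtain h where h: "bij_betw h V {0..<card V}"
    using ex_bij_betw_finite_nat[of V] assms unfolding graph_def by blast
  have "proper_colouring V E (card V) h"
    unfolding proper_colouring_def
  proof (intro conjI allI impI)
    show "h ` V \<subseteq> {..<card V}"
      using bij_betw_imp_surj_on[OF h] by auto
  next
    fix x y
    assume "{x, y} \<in> E"
    then have "{x, y} \<subseteq> V" "card {x, y} = 2"
      using assms unfolding graph_def by auto
    then have "x \<in> V" "y \<in> V" "x \<noteq> y"
      by auto
    then show "h x \<noteq> h y"
      using bij_betw_imp_inj_on[OF h] by (auto dest: inj_onD)
  qed
  then have "\<exists>f. proper_colouring V E (card V) f"
    by blast
  then have "\<exists>f. proper_colouring V E (chromatic_number V E) f"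
    unfolding chromatic_number_def by (rule LeastI)
  then show ?thesis
    using that by blast
qed

lemma graph_complement_edges:
  assumes "finite V"
  shows "graph V (complement_edges V E)"
  using assms unfolding graph_def complement_edges_def by auto

lemma proper_colouring_complement_edges_clique:
  assumes "proper_colouring V (complement_edges V E) k f"
    and "x \<in> V" "y \<in> V" "x \<noteq> y" "f x = f y"
  shows "{x, y} \<in> E"
  using assms unfolding proper_colouring_def complement_edges_def by blast

text \<open>A colour shared by \<open>a \<in> A\<close> and \<open>b \<in> B\<close> would force every vertex of \<open>B - {b}\<close> to
  take the colour of a fixed \<open>a' \<in> A - {a}\<close>, contradicting injectivity on \<open>B\<close>.\<close>
lemma colour_images_disjoint_if_cut:
  assumes "inj_on c A" "inj_on c B" "2 \<le> card A" "3 \<le> card B"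
    and cross: "\<And>a b. a \<in> A \<Longrightarrow> b \<in> B \<Longrightarrow> c a \<noteq> c b \<Longrightarrow> (c a \<in> S \<longleftrightarrow> c b \<notin> S)"
  shows "c ` A \<inter> c ` B = {}"
proof (rule ccontr)
  assume "c ` A \<inter> c ` B \<noteq> {}"
  then obtain a b where ab: "a \<in> A" "b \<in> B" "c a = c b"
    by blast
  have "card (A - {a}) \<noteq> 0"
    using assms(3) ab(1) by (simp add: card_Diff_singleton_if)
  then have "A - {a} \<noteq> {}"
    by force
  then obtain a' where a': "a' \<in> A" "a' \<noteq> a"
    by blast
  have "2 \<le> card (B - {b})"
    using assms(4) ab(2) by (simp add: card_Diff_singleton_if)
  then obtain B2 where "B2 \<subseteq> B - {b}" "card B2 = 2"
    by (meson obtain_subset_with_card_n)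
  then obtain b1 b2 where b12: "b1 \<in> B - {b}" "b2 \<in> B - {b}" "b1 \<noteq> b2"
    by (auto simp: card_2_iff)
  have "c a' \<noteq> c b"
    using assms(1) a' ab by (metis inj_on_contraD)
  have "c bi = c a'" if "bi \<in> B - {b}" for bi
  proof (rule ccontr)
    assume "c bi \<noteq> c a'"
    moreover have "c a \<noteq> c bi"
      using assms(2) that ab by (metis DiffE inj_on_contraD singletonI)
    ultimately show False
      using cross[of a' b] cross[of a bi] cross[of a' bi] a' ab that \<open>c a' \<noteq> c b\<close> by auto
  qed
  then have "c b1 = c b2"
    using b12 by metis
  then show False
    using assms(2) b12 by (metis DiffE inj_on_contraD)
qed

lemma pullback_cut_edges_no_induced_Ksr:
  assumes clique: "\<And>x y. x \<in> V \<Longrightarrow> y \<in> V \<Longrightarrow> x \<noteq> y \<Longrightarrow> c x = c y \<Longrightarrow> {x, y} \<in> E"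
    and "c ` V \<subseteq> W" "\<not> has_Ksr s r W H" "2 \<le> s" "2 < r"
  shows "\<not> has_induced_Ksr s r V (pullback_edges E c (cut_edges H S))"
proof
  let ?F = "pullback_edges E c (cut_edges H S)"
  assume "has_induced_Ksr s r V ?F"
  then obtain A B where AB: "A \<subseteq> V" "B \<subseteq> V" "A \<inter> B = {}" "card A = s" "card B = r"
    and AB_edges: "\<forall>a\<in>A. \<forall>b\<in>B. {a, b} \<in> ?F"
    and A_indep: "\<forall>a\<in>A. \<forall>a'\<in>A. {a, a'} \<notin> ?F"
    and B_indep: "\<forall>b\<in>B. \<forall>b'\<in>B. {b, b'} \<notin> ?F"
    unfolding has_induced_Ksr_def by blast
  have cross_edge: "{c x, c y} \<in> cut_edges H S" if "{x, y} \<in> ?F" "c x \<noteq> c y" for x y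
    using that unfolding pullback_edges_def by auto
  have same_colour_edge: "{x, y} \<in> ?F" if "x \<in> V" "y \<in> V" "x \<noteq> y" "c x = c y" for x y
    using clique[OF that] that(4) unfolding pullback_edges_def by auto
  have inj: "inj_on c A" "inj_on c B"
    using A_indep B_indep same_colour_edge AB(1,2) unfolding inj_on_def by blast+
  have sides: "c a \<in> S \<longleftrightarrow> c b \<notin> S" if "a \<in> A" "b \<in> B" "c a \<noteq> c b" for a b
    using cross_edge[of a b] AB_edges that doubleton_mem_cut_edges_iff[OF that(3)] by auto
  have disjoint: "c ` A \<inter> c ` B = {}"
    using colour_images_disjoint_if_cut[OF inj _ _ sides] AB(4,5) assms(4,5) by simp
  have "has_Ksr s r W H"
    unfolding has_Ksr_def
  proof (intro exI conjI)
    show "c ` A \<subseteq> W" "c ` B \<subseteq> W"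
      using AB(1,2) assms(2) by auto
    show "card (c ` A) = s" "card (c ` B) = r"
      using inj AB(4,5) by (simp_all add: card_image)
    show "\<forall>x\<in>c ` A. \<forall>y\<in>c ` B. {x, y} \<in> H"
      using disjoint AB_edges cross_edge unfolding cut_edges_def by fastforce
  qed (rule disjoint)
  then show False
    using assms(3) by blast
qed

lemma card_permutes_pullback_edges_mem_ge:
  assumes "finite W" "q \<subseteq> W" "card q = 2" "e \<in> E" "card e = 2" "c ` e \<subseteq> W"
  shows "card {\<sigma>. \<sigma> permutes W \<and> \<sigma> ` q \<in> H}
    \<le> card {\<sigma>. \<sigma> permutes W \<and> e \<in> pullback_edges E (\<sigma> \<circ> c) H}"
proof -
  have card_img: "card ((\<sigma> \<circ> c) ` e) = card (c ` e)" if "\<sigma> permutes W" for \<sigma>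
    unfolding image_comp[symmetric] using that by (intro card_image permutes_inj_on)
  have "finite e" "e \<noteq> {}"
    using assms(5) by (metis card.infinite zero_neq_numeral, force)
  then have "0 < card (c ` e)" "card (c ` e) \<le> 2"
    using assms(5) card_image_le[of e c] by auto
  then consider "card (c ` e) = 1" | "card (c ` e) = 2"
    by linarith
  then show ?thesis
  proof cases
    case 1
    then have "{\<sigma>. \<sigma> permutes W \<and> e \<in> pullback_edges E (\<sigma> \<circ> c) H} = {\<sigma>. \<sigma> permutes W}"
      using assms(4) card_img unfolding pullback_edges_def by auto
    then show ?thesis
      using assms(1) by (auto intro!: card_mono finite_permutations)
  next
    case 2
    then have "{\<sigma>. \<sigma> permutes W \<and> e \<in> pullback_edges E (\<sigma> \<circ> c) H}
        = {\<sigma>. \<sigma> permutes W \<and> \<sigma> ` c ` e \<in> H}"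
      using assms(4) card_img unfolding pullback_edges_def by (auto simp: image_comp)
    then show ?thesis
      using card_permutes_image_mem_2_subset_indep[OF assms(2,3) assms(6) 2, of H] by simp
  qed
qed

lemma ex_permutes_pullback_edges_large:
  assumes "finite W" "2 \<le> card W" "finite E"
    and edges: "\<And>e. e \<in> E \<Longrightarrow> card e = 2 \<and> c ` e \<subseteq> W"
    and "H \<subseteq> {p. p \<subseteq> W \<and> card p = 2}"
  obtains \<sigma> where "\<sigma> permutes W"
    "card E * card H \<le> card (pullback_edges E (\<sigma> \<circ> c) H) * (card W choose 2)"
proof -
  obtain q where q: "q \<subseteq> W" "card q = 2"
    using assms(2) obtain_subset_with_card_n by meson
  define P where "P = {\<sigma>. \<sigma> permutes W}"
  define N where "N = card {\<sigma>\<in>P. \<sigma> ` q \<in> H}"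
  have finP: "finite P" "P \<noteq> {}"
    unfolding P_def using assms(1) permutes_id[of W] by (blast intro: finite_permutations)+
  have "N \<le> card {\<sigma>\<in>P. e \<in> pullback_edges E (\<sigma> \<circ> c) H}" if "e \<in> E" for e
    using card_permutes_pullback_edges_mem_ge[OF assms(1) q that] edges[OF that]
    unfolding N_def P_def by simp
  then obtain \<sigma> where \<sigma>: "\<sigma> \<in> P"
    and "card E * N \<le> card {e\<in>E. e \<in> pullback_edges E (\<sigma> \<circ> c) H} * card P"
    using ex_card_filter_ge_average[OF finP assms(3), of N "\<lambda>\<sigma> e. e \<in> pullback_edges E (\<sigma> \<circ> c) H"]
    by blast
  moreover have "{e\<in>E. e \<in> pullback_edges E (\<sigma> \<circ> c) H} = pullback_edges E (\<sigma> \<circ> c) H"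
    unfolding pullback_edges_def by auto
  moreover have "card P = fact (card W)"
    unfolding P_def using assms(1) by (rule card_permutations[OF refl])
  ultimately have large: "card E * N \<le> card (pullback_edges E (\<sigma> \<circ> c) H) * fact (card W)"
    by simp
  have "fact (card W) * (card E * card H) = card E * (N * (card W choose 2))"
    using card_permutes_image_mem[OF assms(1,5) q] unfolding N_def P_def by simp
  also have "\<dots> = card E * N * (card W choose 2)"
    by (simp only: mult.assoc)
  also have "\<dots> \<le> card (pullback_edges E (\<sigma> \<circ> c) H) * fact (card W) * (card W choose 2)"
    using large by (rule mult_right_mono) simp
  also have "\<dots> = fact (card W) * (card (pullback_edges E (\<sigma> \<circ> c) H) * (card W choose 2))"
    by (simp only: ac_simps)
  finally show ?thesis
    using that \<sigma> unfolding P_def by simp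
qed

lemma ex_induced_free_ge_clique_colouring:
  assumes "graph V E" "finite W" "2 \<le> card W"
    and colouring: "f ` V \<subseteq> W"
    and clique: "\<And>x y. x \<in> V \<Longrightarrow> y \<in> V \<Longrightarrow> x \<noteq> y \<Longrightarrow> f x = f y \<Longrightarrow> {x, y} \<in> E"
    and H: "graph W H" "\<not> has_Ksr s r W H" and "2 \<le> s" "2 < r"
  shows "card E * card H \<le> 2 * ex_induced_free V E s r * (card W choose 2)"
proof -
  obtain S where S: "card H \<le> 2 * card (cut_edges H S)"
    using exists_cut_edges_half[OF H(1)] by blast
  have "finite E"
    using assms(1) unfolding graph_def by (auto intro: finite_subset[of E "Pow V"])
  have edges: "card e = 2 \<and> f ` e \<subseteq> W" if "e \<in> E" for e
    using that assms(1) colouring unfolding graph_def by blast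
  have "cut_edges H S \<subseteq> {p. p \<subseteq> W \<and> card p = 2}"
    using H(1) unfolding graph_def cut_edges_def by auto
  then obtain \<sigma> where \<sigma>: "\<sigma> permutes W" and large:
    "card E * card (cut_edges H S) \<le> card (pullback_edges E (\<sigma> \<circ> f) (cut_edges H S)) * (card W choose 2)"
    using ex_permutes_pullback_edges_large[OF assms(2,3) \<open>finite E\<close> edges] by blast
  have "\<not> has_induced_Ksr s r V (pullback_edges E (\<sigma> \<circ> f) (cut_edges H S))"
  proof (rule pullback_cut_edges_no_induced_Ksr[OF _ _ H(2) assms(8,9)])
    show "{x, y} \<in> E" if "x \<in> V" "y \<in> V" "x \<noteq> y" "(\<sigma> \<circ> f) x = (\<sigma> \<circ> f) y" for x y
      using clique[OF that(1-3)] that(4) permutes_inj[OF \<sigma>] by (auto dest: injD)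
    show "(\<sigma> \<circ> f) ` V \<subseteq> W"
      using colouring permutes_in_image[OF \<sigma>] by auto
  qed
  then have le: "card (pullback_edges E (\<sigma> \<circ> f) (cut_edges H S)) \<le> ex_induced_free V E s r"
    using card_le_ex_induced_free[OF \<open>finite E\<close>] unfolding pullback_edges_def by auto
  have "card E * card H \<le> 2 * (card E * card (cut_edges H S))"
    using S by simp
  also have "\<dots> \<le> 2 * (card (pullback_edges E (\<sigma> \<circ> f) (cut_edges H S)) * (card W choose 2))"
    using large by simp
  also have "\<dots> \<le> 2 * ex_induced_free V E s r * (card W choose 2)"
    using le by simp
  finally show ?thesis .
qed

theorem lemma1p4:
  fixes V :: "'a set" and E :: "'a set set" and s r :: nat
  assumes "graph V E" and "2 \<le> s" and "s \<le> r" and "r > 2"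
  shows "real (ex_induced_free V E s r) \<ge>
    (1/2) * real (card E) * real (ex_Ksr (chromatic_number V (complement_edges V E)) s r)
      / real (chromatic_number V (complement_edges V E) choose 2)"
proof -
  define k where "k = chromatic_number V (complement_edges V E)"
  show ?thesis
  proof (cases "k < 2")
    case True
    then have "k choose 2 = 0"
      by (simp add: binomial_eq_0)
    then show ?thesis
      unfolding k_def[symmetric] by (simp del: binomial_eq_0_iff)
  next
    case False
    have "finite V"
      using assms(1) unfolding graph_def by simp
    then obtain f where f: "proper_colouring V (complement_edges V E) k f"
      unfolding k_def using proper_colouring_chromatic_number graph_complement_edges by blast
    obtain H where H: "graph {..<k} H" "\<not> has_Ksr s r {..<k} H" "card H = ex_Ksr k s r"
      using ex_Ksr_attained[of s r k] assms(2,4) by auto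
    have "card E * ex_Ksr k s r \<le> 2 * ex_induced_free V E s r * (k choose 2)"
      using ex_induced_free_ge_clique_colouring[OF assms(1), of "{..<k}" f H s r]
        proper_colouring_complement_edges_clique[OF f] f False H assms(2,4)
      unfolding proper_colouring_def by auto
    then have "real (card E) * real (ex_Ksr k s r) \<le> 2 * real (ex_induced_free V E s r) * real (k choose 2)"
      by (metis of_nat_le_iff of_nat_mult of_nat_numeral)
    moreover have "0 < real (k choose 2)"
      using False by simp
    ultimately show ?thesis
      unfolding k_def[symmetric] by (simp add: field_simps)
  qed
qed

end
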